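(* Let $\mathcal{Q}=\langle\mathcal{A},\mathcal{R}^-,\mathcal{R}^+,\tau\rangle$ be a QBAF, $\sigma$ a gradual semantics, $\alpha\in\mathcal{A}$ and $r_i,r_j\in\mathcal{R}$ with $r_i\neq r_j$. Suppose there exists $\mathcal{S}'\subseteq\mathcal{R}\setminus\{r_i,r_j\}$ with $\sigma_{\mathcal{S}'\cup\{r_i\}}(\alpha)>\sigma_{\mathcal{S}'\cup\{r_j\}}(\alpha)$, and that for all $\mathcal{S}''\subseteq\mathcal{R}\setminus\{r_i,r_j\}$ with $\mathcal{S}''\neq\mathcal{S}'$ we have $\sigma_{\mathcal{S}''\cup\{r_i\}}(\alpha)\ge\sigma_{\mathcal{S}''\cup\{r_j\}}(\alpha)$. Then $\phi^\alpha_\sigma(r_i)>\phi^\alpha_\sigma(r_j)$.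
   Context: A QBAF is a quadruple $\mathcal{Q}=\langle\mathcal{A},\mathcal{R}^-,\mathcal{R}^+,\tau\rangle$ with $\mathcal{A}$ a finite set of arguments, $\mathcal{R}^-,\mathcal{R}^+\subseteq\mathcal{A}\times\mathcal{A}$ disjoint attack and support relations, and $\tau:\mathcal{A}\to[0,1]$ base scores; $\mathcal{R}=\mathcal{R}^-\cup\mathcal{R}^+$. A gradual semantics $\sigma$ assigns strengths in $[0,1]$ to arguments of QBAFs and is assumed well-defined on all QBAFs considered. For $\mathcal{S}\subseteq\mathcal{R}$, $\sigma_{\mathcal{S}}(\alpha)$ denotes the strength of $\alpha$ in $\langle\mathcal{A},\mathcal{R}^-\cap\mathcal{S},\mathcal{R}^+\cap\mathcal{S},\tau\rangle$. The RAE from $r$ to $\alpha$ under $\sigma$ is $$\phi^\alpha_\sigma(r)=\sum_{\mathcal{S}\subseteq\mathcal{R}\setminus\{r\}}\frac{(|\mathcal{R}|-|\mathcal{S}|-1)!\,|\mathcal{S}|!}{|\mathcal{R}|!}\big[\sigma_{\mathcal{S}\cup\{r\}}(\alpha)-\sigma_{\mathcal{S}}(\alpha)\big].$$ *)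

theory Defs
  imports "HOL-Analysis.Analysis"
begin

record 'a qbaf =
  args :: "'a set"
  att  :: "('a \<times> 'a) set"
  supp :: "('a \<times> 'a) set"
  bs   :: "'a \<Rightarrow> real"

definition is_qbaf :: "'a qbaf \<Rightarrow> bool" where
  "is_qbaf Q \<longleftrightarrow> finite (args Q)
     \<and> att Q \<subseteq> args Q \<times> args Q \<and> supp Q \<subseteq> args Q \<times> args Q
     \<and> att Q \<inter> supp Q = {}
     \<and> (\<forall>a\<in>args Q. 0 \<le> bs Q a \<and> bs Q a \<le> 1)"

definition rels :: "'a qbaf \<Rightarrow> ('a \<times> 'a) set" where
  "rels Q = att Q \<union> supp Q"

type_synonym 'a semantics = "'a qbaf \<Rightarrow> 'a \<Rightarrow> real"

definition restrict_rels :: "'a qbaf \<Rightarrow> ('a \<times> 'a) set \<Rightarrow> 'a qbaf" where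
  "restrict_rels Q S = \<lparr>args = args Q, att = att Q \<inter> S, supp = supp Q \<inter> S, bs = bs Q\<rparr>"

definition strength_sub :: "'a semantics \<Rightarrow> 'a qbaf \<Rightarrow> ('a \<times> 'a) set \<Rightarrow> 'a \<Rightarrow> real" where
  "strength_sub \<sigma> Q S \<alpha> = \<sigma> (restrict_rels Q S) \<alpha>"

text \<open>Relation attribution explanation (Shapley value of relation r towards alpha).\<close>
definition RAE :: "'a semantics \<Rightarrow> 'a qbaf \<Rightarrow> 'a \<Rightarrow> ('a \<times> 'a) \<Rightarrow> real" where
  "RAE \<sigma> Q \<alpha> r =
     (\<Sum>S\<in>Pow (rels Q - {r}).
        (fact (card (rels Q) - card S - 1) * fact (card S) / fact (card (rels Q)))
        * (strength_sub \<sigma> Q (S \<union> {r}) \<alpha> - strength_sub \<sigma> Q S \<alpha>))"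

end

theory Submission
  imports Defs
begin

text \<open>The RAE is the Shapley value of the cooperative game whose players are the relations and
  whose value of a coalition S is the strength of \<alpha> in the QBAF restricted to S. Splitting the
  coalitions avoiding ri according to whether they contain rj (and symmetrically for rj), the
  difference of the two Shapley values becomes a combination, with positive weights, of the
  differences of the strengths of \<alpha> under U + ri and under U + rj, over all U disjoint from
  {ri, rj}; all of these are non-negative and one is positive.\<close>

definition shapley_weight :: "nat \<Rightarrow> nat \<Rightarrow> real" where
  "shapley_weight n k = fact (n - k - 1) * fact k / fact n"

definition shapley_value :: "'p set \<Rightarrow> ('p set \<Rightarrow> real) \<Rightarrow> 'p \<Rightarrow> real" where
  "shapley_value R v r =
     (\<Sum>S\<in>Pow (R - {r}). shapley_weight (card R) (card S) * (v (insert r S) - v S))"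

lemma shapley_weight_pos: "shapley_weight n k > 0"
  unfolding shapley_weight_def by simp

lemma sum_Pow_insert:
  assumes "finite T" "s \<notin> T"
  shows "(\<Sum>S\<in>Pow (insert s T). f S) = (\<Sum>S\<in>Pow T. f S) + (\<Sum>S\<in>Pow T. f (insert s S))"
proof -
  have "Pow T \<inter> insert s ` Pow T = {}" "inj_on (insert s) (Pow T)"
    using assms(2) by (auto simp: inj_on_def)
  then show ?thesis
    using assms(1) by (simp add: Pow_insert sum.union_disjoint sum.reindex)
qed

lemma shapley_value_split:
  assumes "finite R" "i \<in> R" "j \<in> R" "i \<noteq> j"
  shows "shapley_value R v i =
    (\<Sum>U\<in>Pow (R - {i, j}).
       shapley_weight (card R) (card U) * (v (insert i U) - v U)
     + shapley_weight (card R) (Suc (card U)) * (v (insert i (insert j U)) - v (insert j U)))"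
proof -
  define T where "T = R - {i, j}"
  have "finite T" "j \<notin> T" and R_minus_i: "R - {i} = insert j T"
    using assms unfolding T_def by auto
  have card_insert_j: "card (insert j U) = Suc (card U)" if "U \<in> Pow T" for U
    using that \<open>finite T\<close> \<open>j \<notin> T\<close> by (auto intro: card_insert_disjoint finite_subset)
  have "shapley_value R v i =
      (\<Sum>U\<in>Pow T. shapley_weight (card R) (card U) * (v (insert i U) - v U))
    + (\<Sum>U\<in>Pow T. shapley_weight (card R) (card (insert j U))
                    * (v (insert i (insert j U)) - v (insert j U)))"
    unfolding shapley_value_def R_minus_i by (rule sum_Pow_insert[OF \<open>finite T\<close> \<open>j \<notin> T\<close>])
  then show ?thesis
    unfolding T_def[symmetric] by (simp add: card_insert_j sum.distrib)
qed

lemma shapley_value_diff: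
  assumes "finite R" "i \<in> R" "j \<in> R" "i \<noteq> j"
  shows "shapley_value R v i - shapley_value R v j =
    (\<Sum>U\<in>Pow (R - {i, j}).
       (shapley_weight (card R) (card U) + shapley_weight (card R) (Suc (card U)))
       * (v (insert i U) - v (insert j U)))"
proof -
  have "{j, i} = {i, j}" by blast
  then show ?thesis
    using shapley_value_split[OF assms, of v]
      shapley_value_split[OF assms(1,3,2) assms(4)[symmetric], of v]
    by (simp add: insert_commute sum_subtractf[symmetric] algebra_simps)
qed

lemma shapley_value_less:
  assumes "finite R" "i \<in> R" "j \<in> R" "i \<noteq> j"
    and weakly_better: "\<And>U. U \<subseteq> R - {i, j} \<Longrightarrow> v (insert j U) \<le> v (insert i U)"
    and "S \<subseteq> R - {i, j}" and strictly_better: "v (insert j S) < v (insert i S)"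
  shows "shapley_value R v j < shapley_value R v i"
proof -
  let ?term = "\<lambda>U. (shapley_weight (card R) (card U) + shapley_weight (card R) (Suc (card U)))
                    * (v (insert i U) - v (insert j U))"
  have "0 < (\<Sum>U\<in>Pow (R - {i, j}). ?term U)"
  proof (rule sum_pos2)
    show "finite (Pow (R - {i, j}))" "S \<in> Pow (R - {i, j})"
      using assms(1,6) by auto
    show "0 < ?term S"
      using strictly_better by (simp add: shapley_weight_pos add_pos_pos)
    show "0 \<le> ?term U" if "U \<in> Pow (R - {i, j})" for U
      using weakly_better[of U] that
      by (intro mult_nonneg_nonneg add_nonneg_nonneg) (auto simp: less_imp_le shapley_weight_pos)
  qed
  then show ?thesis
    using shapley_value_diff[OF assms(1-4), of v] by simp
qed

lemma finite_rels: "is_qbaf Q \<Longrightarrow> finite (rels Q)"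
  unfolding is_qbaf_def rels_def by (meson finite_SigmaI finite_Un finite_subset)

lemma RAE_eq_shapley_value: "RAE \<sigma> Q \<alpha> r = shapley_value (rels Q) (\<lambda>S. strength_sub \<sigma> Q S \<alpha>) r"
  unfolding RAE_def shapley_value_def shapley_weight_def by simp

theorem proposition5:
  fixes Q :: "'a qbaf" and \<sigma> :: "'a semantics" and \<alpha> :: 'a
    and ri rj :: "'a \<times> 'a" and S' :: "('a \<times> 'a) set"
  assumes "is_qbaf Q"
    and "\<And>Q' a. is_qbaf Q' \<Longrightarrow> 0 \<le> \<sigma> Q' a \<and> \<sigma> Q' a \<le> 1"
    and "\<alpha> \<in> args Q"
    and "ri \<in> rels Q" and "rj \<in> rels Q" and "ri \<noteq> rj"
    and "S' \<subseteq> rels Q - {ri, rj}"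
    and "strength_sub \<sigma> Q (S' \<union> {ri}) \<alpha> > strength_sub \<sigma> Q (S' \<union> {rj}) \<alpha>"
    and "\<And>S''. S'' \<subseteq> rels Q - {ri, rj} \<Longrightarrow> S'' \<noteq> S' \<Longrightarrow>
           strength_sub \<sigma> Q (S'' \<union> {ri}) \<alpha> \<ge> strength_sub \<sigma> Q (S'' \<union> {rj}) \<alpha>"
  shows "RAE \<sigma> Q \<alpha> ri > RAE \<sigma> Q \<alpha> rj"
proof -
  define v where "v S = strength_sub \<sigma> Q S \<alpha>" for S
  have strictly_better: "v (insert rj S') < v (insert ri S')"
    using assms(8) unfolding v_def by simp
  have weakly_better: "v (insert rj U) \<le> v (insert ri U)" if "U \<subseteq> rels Q - {ri, rj}" for U
    using assms(9)[OF that] strictly_better unfolding v_def by (cases "U = S'") auto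
  show ?thesis
    unfolding RAE_eq_shapley_value v_def[symmetric]
    using shapley_value_less[OF finite_rels[OF assms(1)] assms(4-6) weakly_better assms(7) strictly_better]
    by simp
qed

end
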